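(* Let $P,PA$ be labelings, $c$ a command and $\rho_1,\rho_2,\mu_1,\mu_2$ states. Assume $\mathtt b\notin\mathrm{UsedVars}(c)$, $\rho_1(\mathtt b)=\rho_2(\mathtt b)=0$, $|a|_{\mu_1}>0$ and $|a|_{\mu_2}>0$ for every array $a$, $P;PA\vdash_{ct}c$, $\rho_1\sim_P\rho_2$ and $\mu_1\sim_{PA}\mu_2$. Then $\langle\mathrm{SiSLH}_P(c),\rho_1,\mu_1,\mathtt{false}\rangle\approx_s\langle\mathrm{SiSLH}_P(c),\rho_2,\mu_2,\mathtt{false}\rangle$.
   Context: Language AWhile: scalar variables $X\in\mathcal V$, array names $a\in\mathcal A$. Arithmetic expressions $e::=n\ (n\in\mathbb N)\mid X\mid \mathrm{op}_{\mathbb N}(e,\dots,e)\mid be\,?\,e_1:e_2$; boolean expressions $be::=\mathtt{true}\mid\mathtt{false}\mid\mathrm{cmp}(e,e)\mid\mathrm{op}_{\mathbb B}(be,\dots,be)$; commands $c::=\mathtt{skip}\mid X:=e\mid c_1;c_2\mid \mathtt{if}\ be\ \mathtt{then}\ c_1\ \mathtt{else}\ c_2\mid\mathtt{while}\ be\ \mathtt{do}\ c\mid X\leftarrow a[e]\mid a[e]\leftarrow e'$. A scalar state is $\rho:\mathcal V\to\mathbb N$; an array state $\mu$ gives each array $a$ a size $|a|_\mu$ and values $\mu(a)[i]$ for $0\le i<|a|_\mu$. $[\![\cdot]\!]_\rho$ is the usual pure evaluation. $\mathrm{UsedVars}(c)$ is the set of scalar variables occurring in $c$; $\mathtt b$ is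 a reserved scalar variable. Speculative semantics: configurations $\langle c,\rho,\mu,\beta\rangle$ with boolean misspeculation flag $\beta$; steps $\xrightarrow[d]{o}$ with optional observation $o\in\{\mathrm{branch}(v),\mathrm{read}(a,i),\mathrm{write}(a,i)\}$ and optional directive $d\in\{\mathit{step},\mathit{force},\mathrm{load}(a',j),\mathrm{store}(a',j)\}$. $X:=e\to\mathtt{skip}$ updating $\rho[X\mapsto[\![e]\!]_\rho]$; if $c_1$ steps to $c_1'$ then $c_1;c_2$ steps to $c_1';c_2$ with the same label; $\mathtt{skip};c\to c$; $\mathtt{while}\ be\ \mathtt{do}\ c\to\mathtt{if}\ be\ \mathtt{then}\ (c;\mathtt{while}\ be\ \mathtt{do}\ c)\ \mathtt{else}\ \mathtt{skip}$ (these keep $\beta$, have no observation/directive except as inherited). Conditional: with $\mathit{step}$ go to branch $v=[\![be]\!]_\rho$, flag unchanged; with $\mathit{force}$ go to branch $\neg v$ and set $\beta:=\mathtt{true}$; both observe $\mathrm{branch}(v)$. $X\leftarrow a[ie]$ with $\mathit{step}$: requires $i=[\![ie]\!]_\rho<|a|_\mu$, sets $X$ to $\mu(a)[i]$; with $\mathrm{load}(a',j)$: requires $\beta=\mathtt{true}$, $i\ge|a|_\mu$, $j<|a'|_\mu$, sets $X$ to $\mu(a')[j]$; both observe $\mathrm{read}(a,i)$. $a[ie]\leftarrow e$ with $\mathit{step}$: requires $i<|a|_\mu$, sets $\mu[a[i]\mapsto[\![e]\!]_\rho]$; with $\mathrm{store}(a',j)$: requires $\beta=\mathtt{true}$, $i\ge|a|_\mu$,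 $j<|a'|_\mu$, sets $\mu[a'[j]\mapsto[\![e]\!]_\rho]$; both observe $\mathrm{write}(a,i)$. Multi-step $\xrightarrow[D]{O}{}^*$ collects directives $D$ and observations $O$. $\langle c_1,\rho_1,\mu_1,\beta_1\rangle\approx_s\langle c_2,\rho_2,\mu_2,\beta_2\rangle$ iff for all $D,O_1,O_2$, if both configurations multi-step with directives $D$ producing $O_1$ resp. $O_2$, then $O_1=O_2$. Labels: $\mathtt{true}$=public, $\mathtt{false}$=secret; $\ell_1\sqsubseteq\ell_2$ iff $\ell_2=\mathtt{true}\Rightarrow\ell_1=\mathtt{true}$. $P:\mathcal V\to$ labels, $PA:\mathcal A\to$ labels; $P(e)$, $P(be)$ are public iff all scalar variables occurring are public. $\rho_1\sim_P\rho_2$ iff they agree on all $X$ with $P(X)=\mathtt{true}$; $\mu_1\sim_{PA}\mu_2$ iff they agree on sizes and contents of all $a$ with $PA(a)=\mathtt{true}$. CCT typing $P;PA\vdash_{ct}c$: $\mathtt{skip}$; $X:=e$ if $P(e)\sqsubseteq P(X)$; $c_1;c_2$ if both typed; $\mathtt{if}\ be\ \mathtt{then}\ c_1\ \mathtt{else}\ c_2$ if $P(be)=\mathtt{true}$ and both branches typed; $\mathtt{while}\ be\ \mathtt{do}\ c$ if $P(be)=\mathtt{true}$ and $c$ typed; $X\leftarrow a[i]$ if $P(i)=\mathtt{true}$ and $PA(a)\sqsubseteq P(X)$; $a[i]\leftarrow e$ if $P(i)=\mathtt{true}$ and $P(e)\sqsubseteq PA(a)$. Index-SLH recipe with parameters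 $B(be)$, $R(X,i)$, $W(i,e)$: $[\![\mathtt{skip}]\!]=\mathtt{skip}$; $[\![X:=e]\!]=X:=e$; $[\![c_1;c_2]\!]=[\![c_1]\!];[\![c_2]\!]$; $[\![\mathtt{if}\ be\ \mathtt{then}\ c_1\ \mathtt{else}\ c_2]\!]=\mathtt{if}\ B(be)\ \mathtt{then}\ (\mathtt b:=B(be)\,?\,\mathtt b:1;[\![c_1]\!])\ \mathtt{else}\ (\mathtt b:=B(be)\,?\,1:\mathtt b;[\![c_2]\!])$; $[\![\mathtt{while}\ be\ \mathtt{do}\ c]\!]=(\mathtt{while}\ B(be)\ \mathtt{do}\ (\mathtt b:=B(be)\,?\,\mathtt b:1;[\![c]\!]));\ \mathtt b:=B(be)\,?\,1:\mathtt b$; $[\![X\leftarrow a[i]]\!]=X\leftarrow a[R(X,i)]$; $[\![a[i]\leftarrow e]\!]=a[W(i,e)]\leftarrow e$. With $m(i)=(\mathtt b==1)\,?\,0:i$, $\mathrm{SiSLH}_P$ is the instance with $B(be)=be$; $R(X,i)=m(i)$ if $P(X)=\mathtt{true}$, else $i$; $W(i,e)=m(i)$ if $P(e)=\mathtt{false}$, else $i$. *)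

theory Defs
  imports Main
begin

type_synonym vname = string
type_synonym aname = string

datatype aexp = ANum nat | AId vname | AOp "nat list \<Rightarrow> nat" "aexp list"
  | ACond bexp aexp aexp
and bexp = BTrue | BFalse | BCmp "nat \<Rightarrow> nat \<Rightarrow> bool" aexp aexp
  | BOp "bool list \<Rightarrow> bool" "bexp list"

datatype com = Skip | Asgn vname aexp | Seq com com | If bexp com com
  | While bexp com | ARead vname aname aexp | AWrite aname aexp aexp

type_synonym state = "vname \<Rightarrow> nat"
(* array state: each array is a list; its size is the list length *)
type_synonym astate = "aname \<Rightarrow> nat list"

fun aeval :: "aexp \<Rightarrow> state \<Rightarrow> nat" and beval :: "bexp \<Rightarrow> state \<Rightarrow> bool" where
  "aeval (ANum n) s = n"
| "aeval (AId x) s = s x"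
| "aeval (AOp f es) s = f (map (\<lambda>e. aeval e s) es)"
| "aeval (ACond be e1 e2) s = (if beval be s then aeval e1 s else aeval e2 s)"
| "beval BTrue s = True"
| "beval BFalse s = False"
| "beval (BCmp f e1 e2) s = f (aeval e1 s) (aeval e2 s)"
| "beval (BOp f bs) s = f (map (\<lambda>b. beval b s) bs)"

fun avars :: "aexp \<Rightarrow> vname set" and bvars :: "bexp \<Rightarrow> vname set" where
  "avars (ANum n) = {}"
| "avars (AId x) = {x}"
| "avars (AOp f es) = (\<Union>e\<in>set es. avars e)"
| "avars (ACond be e1 e2) = bvars be \<union> avars e1 \<union> avars e2"
| "bvars BTrue = {}"
| "bvars BFalse = {}"
| "bvars (BCmp f e1 e2) = avars e1 \<union> avars e2"
| "bvars (BOp f bs) = (\<Union>b\<in>set bs. bvars b)"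

fun used_vars :: "com \<Rightarrow> vname set" where
  "used_vars Skip = {}"
| "used_vars (Asgn x e) = {x} \<union> avars e"
| "used_vars (Seq c1 c2) = used_vars c1 \<union> used_vars c2"
| "used_vars (If be c1 c2) = bvars be \<union> used_vars c1 \<union> used_vars c2"
| "used_vars (While be c) = bvars be \<union> used_vars c"
| "used_vars (ARead x a i) = {x} \<union> avars i"
| "used_vars (AWrite a i e) = avars i \<union> avars e"

definition bvar :: vname where "bvar = ''b''"

datatype obs = OBranch bool | ORead aname nat | OWrite aname nat
datatype dir = DStep | DForce | DLoad aname nat | DStore aname nat

type_synonym config = "com \<times> state \<times> astate \<times> bool"

(* optional directive / observation encoded as lists of length \<le> 1 *)
inductive spec_step :: "config \<Rightarrow> dir list \<Rightarrow> obs list \<Rightarrow> config \<Rightarrow> bool" where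
  Asgn: "spec_step (Asgn x e, \<rho>, \<mu>, \<beta>) [] [] (Skip, \<rho>(x := aeval e \<rho>), \<mu>, \<beta>)"
| Seq: "spec_step (c1, \<rho>, \<mu>, \<beta>) ds os (c1', \<rho>', \<mu>', \<beta>') \<Longrightarrow>
        spec_step (Seq c1 c2, \<rho>, \<mu>, \<beta>) ds os (Seq c1' c2, \<rho>', \<mu>', \<beta>')"
| Seq_Skip: "spec_step (Seq Skip c, \<rho>, \<mu>, \<beta>) [] [] (c, \<rho>, \<mu>, \<beta>)"
| If: "v = beval be \<rho> \<Longrightarrow>
       spec_step (If be c1 c2, \<rho>, \<mu>, \<beta>) [DStep] [OBranch v]
                 (if v then c1 else c2, \<rho>, \<mu>, \<beta>)"
| If_Force: "v = beval be \<rho> \<Longrightarrow>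
       spec_step (If be c1 c2, \<rho>, \<mu>, \<beta>) [DForce] [OBranch v]
                 (if v then c2 else c1, \<rho>, \<mu>, True)"
| While: "spec_step (While be c, \<rho>, \<mu>, \<beta>) [] []
                 (If be (Seq c (While be c)) Skip, \<rho>, \<mu>, \<beta>)"
| ARead: "i = aeval ie \<rho> \<Longrightarrow> i < length (\<mu> a) \<Longrightarrow>
       spec_step (ARead x a ie, \<rho>, \<mu>, \<beta>) [DStep] [ORead a i]
                 (Skip, \<rho>(x := \<mu> a ! i), \<mu>, \<beta>)"
| ARead_Force: "i = aeval ie \<rho> \<Longrightarrow> \<beta> \<Longrightarrow> i \<ge> length (\<mu> a) \<Longrightarrow> j < length (\<mu> a') \<Longrightarrow>
       spec_step (ARead x a ie, \<rho>, \<mu>, \<beta>) [DLoad a' j] [ORead a i]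
                 (Skip, \<rho>(x := \<mu> a' ! j), \<mu>, \<beta>)"
| AWrite: "i = aeval ie \<rho> \<Longrightarrow> i < length (\<mu> a) \<Longrightarrow>
       spec_step (AWrite a ie e, \<rho>, \<mu>, \<beta>) [DStep] [OWrite a i]
                 (Skip, \<rho>, \<mu>(a := (\<mu> a)[i := aeval e \<rho>]), \<beta>)"
| AWrite_Force: "i = aeval ie \<rho> \<Longrightarrow> \<beta> \<Longrightarrow> i \<ge> length (\<mu> a) \<Longrightarrow> j < length (\<mu> a') \<Longrightarrow>
       spec_step (AWrite a ie e, \<rho>, \<mu>, \<beta>) [DStore a' j] [OWrite a i]
                 (Skip, \<rho>, \<mu>(a' := (\<mu> a')[j := aeval e \<rho>]), \<beta>)"

inductive spec_multi :: "config \<Rightarrow> dir list \<Rightarrow> obs list \<Rightarrow> config \<Rightarrow> bool" where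
  refl: "spec_multi c [] [] c"
| step: "spec_step c ds os c' \<Longrightarrow> spec_multi c' ds' os' c'' \<Longrightarrow>
         spec_multi c (ds @ ds') (os @ os') c''"

definition spec_equiv :: "config \<Rightarrow> config \<Rightarrow> bool" where
  "spec_equiv cf1 cf2 \<longleftrightarrow>
     (\<forall>D O1 O2 cf1' cf2'. spec_multi cf1 D O1 cf1' \<longrightarrow> spec_multi cf2 D O2 cf2' \<longrightarrow> O1 = O2)"

(* True = public, False = secret *)
definition flows :: "bool \<Rightarrow> bool \<Rightarrow> bool" where
  "flows l1 l2 \<longleftrightarrow> (l2 \<longrightarrow> l1)"

definition label_a :: "(vname \<Rightarrow> bool) \<Rightarrow> aexp \<Rightarrow> bool" where
  "label_a P e \<longleftrightarrow> (\<forall>x\<in>avars e. P x)"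

definition label_b :: "(vname \<Rightarrow> bool) \<Rightarrow> bexp \<Rightarrow> bool" where
  "label_b P be \<longleftrightarrow> (\<forall>x\<in>bvars be. P x)"

definition pub_equiv :: "(vname \<Rightarrow> bool) \<Rightarrow> state \<Rightarrow> state \<Rightarrow> bool" where
  "pub_equiv P \<rho>1 \<rho>2 \<longleftrightarrow> (\<forall>x. P x \<longrightarrow> \<rho>1 x = \<rho>2 x)"

definition apub_equiv :: "(aname \<Rightarrow> bool) \<Rightarrow> astate \<Rightarrow> astate \<Rightarrow> bool" where
  "apub_equiv PA \<mu>1 \<mu>2 \<longleftrightarrow> (\<forall>a. PA a \<longrightarrow> \<mu>1 a = \<mu>2 a)"

inductive ct_typed :: "(vname \<Rightarrow> bool) \<Rightarrow> (aname \<Rightarrow> bool) \<Rightarrow> com \<Rightarrow> bool" where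
  CT_Skip: "ct_typed P PA Skip"
| CT_Asgn: "flows (label_a P e) (P x) \<Longrightarrow> ct_typed P PA (Asgn x e)"
| CT_Seq: "ct_typed P PA c1 \<Longrightarrow> ct_typed P PA c2 \<Longrightarrow> ct_typed P PA (Seq c1 c2)"
| CT_If: "label_b P be \<Longrightarrow> ct_typed P PA c1 \<Longrightarrow> ct_typed P PA c2 \<Longrightarrow>
          ct_typed P PA (If be c1 c2)"
| CT_While: "label_b P be \<Longrightarrow> ct_typed P PA c \<Longrightarrow> ct_typed P PA (While be c)"
| CT_ARead: "label_a P i \<Longrightarrow> flows (PA a) (P x) \<Longrightarrow> ct_typed P PA (ARead x a i)"
| CT_AWrite: "label_a P i \<Longrightarrow> flows (label_a P e) (PA a) \<Longrightarrow> ct_typed P PA (AWrite a i e)"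

fun idx_slh :: "(bexp \<Rightarrow> bexp) \<Rightarrow> (vname \<Rightarrow> aexp \<Rightarrow> aexp) \<Rightarrow> (aexp \<Rightarrow> aexp \<Rightarrow> aexp)
                \<Rightarrow> com \<Rightarrow> com" where
  "idx_slh B R W Skip = Skip"
| "idx_slh B R W (Asgn x e) = Asgn x e"
| "idx_slh B R W (Seq c1 c2) = Seq (idx_slh B R W c1) (idx_slh B R W c2)"
| "idx_slh B R W (If be c1 c2) =
     If (B be)
        (Seq (Asgn bvar (ACond (B be) (AId bvar) (ANum 1))) (idx_slh B R W c1))
        (Seq (Asgn bvar (ACond (B be) (ANum 1) (AId bvar))) (idx_slh B R W c2))"
| "idx_slh B R W (While be c) =
     Seq (While (B be) (Seq (Asgn bvar (ACond (B be) (AId bvar) (ANum 1))) (idx_slh B R W c)))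
         (Asgn bvar (ACond (B be) (ANum 1) (AId bvar)))"
| "idx_slh B R W (ARead x a i) = ARead x a (R x i)"
| "idx_slh B R W (AWrite a i e) = AWrite a (W i e) e"

definition mask :: "aexp \<Rightarrow> aexp" where
  "mask i = ACond (BCmp (=) (AId bvar) (ANum 1)) (ANum 0) i"

definition sislh :: "(vname \<Rightarrow> bool) \<Rightarrow> com \<Rightarrow> com" where
  "sislh P = idx_slh (\<lambda>be. be)
                     (\<lambda>x i. if P x then mask i else i)
                     (\<lambda>i e. if \<not> label_a P e then mask i else i)"

end

theory Submission
  imports Defs
begin

(* Run the two executions in lockstep under the same directives. They stay low-equivalent
   (same command and flag, equal public variables, equal b, equal public arrays), because
   guards and indices are public. The only danger is misspeculation, and there the
   invariant "flag set implies b = 1, or b is set to 1 by the very next step" holds: a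
   forced branch lands on the SLH update of b whose guard now disagrees with the branch
   taken, and b = 1 is never undone. With b = 1 every masked index is 0, in bounds because
   arrays are nonempty, so public variables are only loaded from public arrays and secrets
   are never stored out of bounds; unmasked accesses only move public values into arbitrary
   locations or arbitrary values into secret variables. *)

lemma eval_cong:
  "\<forall>x\<in>avars e. \<rho>1 x = \<rho>2 x \<Longrightarrow> aeval e \<rho>1 = aeval e \<rho>2"
  "\<forall>x\<in>bvars be. \<rho>1 x = \<rho>2 x \<Longrightarrow> beval be \<rho>1 = beval be \<rho>2"
  by (induction e and be) (auto cong: map_cong)

lemma aeval_pub_equiv: "label_a P e \<Longrightarrow> pub_equiv P \<rho>1 \<rho>2 \<Longrightarrow> aeval e \<rho>1 = aeval e \<rho>2"
  by (rule eval_cong(1)) (auto simp: label_a_def pub_equiv_def)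

lemma beval_pub_equiv: "label_b P be \<Longrightarrow> pub_equiv P \<rho>1 \<rho>2 \<Longrightarrow> beval be \<rho>1 = beval be \<rho>2"
  by (rule eval_cong(2)) (auto simp: label_b_def pub_equiv_def)

lemma aeval_mask_eq:
  "aeval i \<rho>1 = aeval i \<rho>2 \<Longrightarrow> \<rho>1 bvar = \<rho>2 bvar \<Longrightarrow> aeval (mask i) \<rho>1 = aeval (mask i) \<rho>2"
  by (simp add: mask_def)

lemma aeval_mask_misspec: "\<rho> bvar = 1 \<Longrightarrow> aeval (mask i) \<rho> = 0"
  by (simp add: mask_def)

lemma pub_equiv_update:
  "pub_equiv P \<rho>1 \<rho>2 \<Longrightarrow> (P x \<Longrightarrow> v1 = v2) \<Longrightarrow> pub_equiv P (\<rho>1(x := v1)) (\<rho>2(x := v2))"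
  by (auto simp: pub_equiv_def)

lemma apub_equiv_update:
  "apub_equiv PA \<mu>1 \<mu>2 \<Longrightarrow> (PA a \<Longrightarrow> l1 = l2) \<Longrightarrow> apub_equiv PA (\<mu>1(a := l1)) (\<mu>2(a := l2))"
  by (auto simp: apub_equiv_def)

(* Otherwise simp turns the 1 of the SLH updates into Suc 0 and they no longer match. *)
declare One_nat_def [simp del]

abbreviation slh_then :: "bexp \<Rightarrow> aexp" where
  "slh_then be \<equiv> ACond be (AId bvar) (ANum 1)"

abbreviation slh_else :: "bexp \<Rightarrow> aexp" where
  "slh_else be \<equiv> ACond be (ANum 1) (AId bvar)"

inductive slh_safe :: "(vname \<Rightarrow> bool) \<Rightarrow> (aname \<Rightarrow> bool) \<Rightarrow> com \<Rightarrow> bool" for P PA where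
  Skip: "slh_safe P PA Skip"
| Asgn: "x \<noteq> bvar \<Longrightarrow> flows (label_a P e) (P x) \<Longrightarrow> slh_safe P PA (Asgn x e)"
| Asgn_then: "label_b P be \<Longrightarrow> slh_safe P PA (Asgn bvar (slh_then be))"
| Asgn_else: "label_b P be \<Longrightarrow> slh_safe P PA (Asgn bvar (slh_else be))"
| Seq: "slh_safe P PA c1 \<Longrightarrow> slh_safe P PA c2 \<Longrightarrow> slh_safe P PA (Seq c1 c2)"
| If: "label_b P be \<Longrightarrow> slh_safe P PA c1 \<Longrightarrow> slh_safe P PA c2 \<Longrightarrow> slh_safe P PA (If be c1 c2)"
| While: "label_b P be \<Longrightarrow> slh_safe P PA c \<Longrightarrow> slh_safe P PA (While be c)"
| Read_public: "x \<noteq> bvar \<Longrightarrow> label_a P i \<Longrightarrow> P x \<Longrightarrow> PA a \<Longrightarrow> slh_safe P PA (ARead x a (mask i))"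
| Read_secret: "x \<noteq> bvar \<Longrightarrow> label_a P i \<Longrightarrow> \<not> P x \<Longrightarrow> slh_safe P PA (ARead x a i)"
| Write_public: "label_a P i \<Longrightarrow> label_a P e \<Longrightarrow> slh_safe P PA (AWrite a i e)"
| Write_secret: "label_a P i \<Longrightarrow> \<not> label_a P e \<Longrightarrow> \<not> PA a \<Longrightarrow> slh_safe P PA (AWrite a (mask i) e)"

text \<open>Beyond \<open>slh_safe\<close>, this records that each branch begins with its SLH update; the
  loop rules follow a hardened loop through its unrolling.\<close>

inductive slh_reachable :: "(vname \<Rightarrow> bool) \<Rightarrow> (aname \<Rightarrow> bool) \<Rightarrow> com \<Rightarrow> bool" for P PA where
  Skip: "slh_reachable P PA Skip"
| Asgn: "slh_safe P PA (Asgn x e) \<Longrightarrow> slh_reachable P PA (Asgn x e)"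
| Read: "slh_safe P PA (ARead x a i) \<Longrightarrow> slh_reachable P PA (ARead x a i)"
| Write: "slh_safe P PA (AWrite a i e) \<Longrightarrow> slh_reachable P PA (AWrite a i e)"
| Seq: "slh_reachable P PA c1 \<Longrightarrow> slh_reachable P PA c2 \<Longrightarrow> slh_reachable P PA (Seq c1 c2)"
| If: "label_b P be \<Longrightarrow> slh_reachable P PA c1 \<Longrightarrow> slh_reachable P PA c2 \<Longrightarrow>
    slh_reachable P PA
      (If be (Seq (Asgn bvar (slh_then be)) c1) (Seq (Asgn bvar (slh_else be)) c2))"
| Loop: "label_b P be \<Longrightarrow> slh_reachable P PA c \<Longrightarrow>
    slh_reachable P PA
      (Seq (While be (Seq (Asgn bvar (slh_then be)) c)) (Asgn bvar (slh_else be)))"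
| Loop_unfolded: "label_b P be \<Longrightarrow> slh_reachable P PA c \<Longrightarrow>
    slh_reachable P PA
      (Seq (If be (Seq (Seq (Asgn bvar (slh_then be)) c) (While be (Seq (Asgn bvar (slh_then be)) c)))
               Skip)
           (Asgn bvar (slh_else be)))"
| Loop_body: "label_b P be \<Longrightarrow> slh_reachable P PA c \<Longrightarrow> slh_reachable P PA c' \<Longrightarrow>
    slh_reachable P PA
      (Seq (Seq c' (While be (Seq (Asgn bvar (slh_then be)) c))) (Asgn bvar (slh_else be)))"

lemma slh_reachable_safe: "slh_reachable P PA c \<Longrightarrow> slh_safe P PA c"
  by (induction rule: slh_reachable.induct) (blast intro: slh_safe.intros)+

lemma slh_reachable_sislh:
  "ct_typed P PA c \<Longrightarrow> bvar \<notin> used_vars c \<Longrightarrow> slh_reachable P PA (sislh P c)"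
proof (induction rule: ct_typed.induct)
  case (CT_ARead P i PA a x)
  then show ?case
  proof (cases "P x")
    case True
    with CT_ARead show ?thesis
      by (auto simp: sislh_def flows_def intro!: slh_reachable.Read slh_safe.Read_public)
  next
    case False
    with CT_ARead show ?thesis
      by (auto simp: sislh_def intro!: slh_reachable.Read slh_safe.Read_secret)
  qed
next
  case (CT_AWrite P i e PA a)
  then show ?case
  proof (cases "label_a P e")
    case True
    with CT_AWrite show ?thesis
      by (auto simp: sislh_def intro!: slh_reachable.Write slh_safe.Write_public)
  next
    case False
    with CT_AWrite show ?thesis
      by (auto simp: sislh_def flows_def intro!: slh_reachable.Write slh_safe.Write_secret)
  qed
next
  case (CT_If P be PA c1 c2)
  then show ?case unfolding sislh_def idx_slh.simps by (intro slh_reachable.If) (auto simp: sislh_def)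
next
  case (CT_While P be PA c)
  then show ?case unfolding sislh_def idx_slh.simps by (intro slh_reachable.Loop) (auto simp: sislh_def)
qed (auto simp: sislh_def intro!: slh_reachable.intros slh_safe.intros)

inductive_cases Skip_stepE[elim!]: "spec_step (Skip, \<rho>, \<mu>, \<beta>) ds os cf"
inductive_cases Seq_stepE: "spec_step (Seq c1 c2, \<rho>, \<mu>, \<beta>) ds os cf"
inductive_cases Asgn_stepE: "spec_step (Asgn x e, \<rho>, \<mu>, \<beta>) ds os cf"
inductive_cases If_stepE: "spec_step (If be c1 c2, \<rho>, \<mu>, \<beta>) ds os cf"
inductive_cases While_stepE: "spec_step (While be c, \<rho>, \<mu>, \<beta>) ds os cf"
inductive_cases ARead_stepE: "spec_step (ARead x a i, \<rho>, \<mu>, \<beta>) ds os cf"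
inductive_cases AWrite_stepE: "spec_step (AWrite a i e, \<rho>, \<mu>, \<beta>) ds os cf"

lemma spec_step_length: "spec_step cf ds os cf' \<Longrightarrow> length os = length ds"
  by (induction rule: spec_step.induct) auto

lemma spec_multi_length: "spec_multi cf ds os cf' \<Longrightarrow> length os = length ds"
  by (induction rule: spec_multi.induct) (auto dest: spec_step_length)

lemma spec_step_dirs_length_eq:
  "spec_step (c, \<rho>1, \<mu>1, \<beta>1) ds1 os1 cf1 \<Longrightarrow> spec_step (c, \<rho>2, \<mu>2, \<beta>2) ds2 os2 cf2 \<Longrightarrow>
    length ds1 = length ds2"
proof (induction "(c, \<rho>1, \<mu>1, \<beta>1)" ds1 os1 cf1 arbitrary: c \<rho>1 \<mu>1 \<beta>1 cf2 ds2 os2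
    rule: spec_step.induct)
  case Seq
  then show ?case by (auto elim!: Seq_stepE)
qed (auto elim: Seq_stepE Asgn_stepE If_stepE While_stepE ARead_stepE AWrite_stepE)

lemma spec_step_flag:
  "spec_step (c, \<rho>, \<mu>, \<beta>) ds os (c', \<rho>', \<mu>', \<beta>') \<Longrightarrow> \<beta>' = (\<beta> \<or> ds = [DForce])"
  by (induction "(c, \<rho>, \<mu>, \<beta>)" ds os "(c', \<rho>', \<mu>', \<beta>')" arbitrary: c \<rho> \<mu> \<beta> c' \<rho>' \<mu>' \<beta>'
      rule: spec_step.induct) auto

lemma spec_step_length_array:
  "spec_step (c, \<rho>, \<mu>, \<beta>) ds os (c', \<rho>', \<mu>', \<beta>') \<Longrightarrow> length (\<mu>' a) = length (\<mu> a)"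
  by (induction "(c, \<rho>, \<mu>, \<beta>)" ds os "(c', \<rho>', \<mu>', \<beta>')" arbitrary: c \<rho> \<mu> \<beta> c' \<rho>' \<mu>' \<beta>'
      rule: spec_step.induct) auto

fun sets_b_next :: "com \<Rightarrow> state \<Rightarrow> bool" where
  "sets_b_next (Asgn x e) \<rho> \<longleftrightarrow> x = bvar \<and> aeval e \<rho> = 1"
| "sets_b_next (Seq c1 c2) \<rho> \<longleftrightarrow> sets_b_next c1 \<rho> \<or> (c1 = Skip \<and> sets_b_next c2 \<rho>)"
| "sets_b_next _ \<rho> \<longleftrightarrow> False"

lemma slh_reachable_step:
  "slh_reachable P PA c \<Longrightarrow> spec_step (c, \<rho>, \<mu>, \<beta>) ds os (c', \<rho>', \<mu>', \<beta>') \<Longrightarrow>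
    slh_reachable P PA c'"
proof (induction c arbitrary: c' \<rho> \<mu> \<beta> ds os \<rho>' \<mu>' \<beta>' rule: slh_reachable.induct)
  case (Loop_unfolded be c)
  have "slh_reachable P PA (Seq Skip (Asgn bvar (slh_else be)))"
    using Loop_unfolded.hyps by (intro slh_reachable.intros slh_safe.intros)
  moreover have "slh_reachable P PA (Seq (Seq (Seq (Asgn bvar (slh_then be)) c)
      (While be (Seq (Asgn bvar (slh_then be)) c))) (Asgn bvar (slh_else be)))"
    using Loop_unfolded.hyps by (intro slh_reachable.intros slh_safe.intros)
  ultimately show ?case
    using Loop_unfolded.prems by (auto elim!: Seq_stepE If_stepE)
next
  case If
  then show ?case by (auto elim!: If_stepE intro!: slh_reachable.intros slh_safe.intros)
qed (auto elim!: Seq_stepE While_stepE Asgn_stepE ARead_stepE AWrite_stepE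
    intro: slh_reachable.intros)

text \<open>A mispredicted branch is always entered through the SLH update of \<open>bvar\<close> whose guard
  now evaluates against the branch taken, so that update sets \<open>bvar\<close> to 1.\<close>

lemma slh_reachable_force_sets_b:
  "slh_reachable P PA c \<Longrightarrow> spec_step (c, \<rho>, \<mu>, \<beta>) [DForce] os (c', \<rho>', \<mu>', \<beta>') \<Longrightarrow>
    sets_b_next c' \<rho>'"
  by (induction c arbitrary: c' \<rho> \<mu> \<beta> os \<rho>' \<mu>' \<beta>' rule: slh_reachable.induct)
    (auto elim!: Seq_stepE If_stepE While_stepE Asgn_stepE ARead_stepE AWrite_stepE)

lemma sets_b_next_step:
  "spec_step (c, \<rho>, \<mu>, \<beta>) ds os (c', \<rho>', \<mu>', \<beta>') \<Longrightarrow> sets_b_next c \<rho> \<Longrightarrow>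
    \<rho>' bvar = 1 \<or> sets_b_next c' \<rho>'"
  by (induction "(c, \<rho>, \<mu>, \<beta>)" ds os "(c', \<rho>', \<mu>', \<beta>')" arbitrary: c \<rho> \<mu> \<beta> c' \<rho>' \<mu>' \<beta>'
      rule: spec_step.induct) auto

text \<open>Both SLH updates map 1 to 1, and no other command writes \<open>bvar\<close>.\<close>

lemma slh_safe_step_keeps_b:
  "spec_step (c, \<rho>, \<mu>, \<beta>) ds os (c', \<rho>', \<mu>', \<beta>') \<Longrightarrow> slh_safe P PA c \<Longrightarrow> \<rho> bvar = 1 \<Longrightarrow>
    \<rho>' bvar = 1"
  by (induction "(c, \<rho>, \<mu>, \<beta>)" ds os "(c', \<rho>', \<mu>', \<beta>')" arbitrary: c \<rho> \<mu> \<beta> c' \<rho>' \<mu>' \<beta>'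
      rule: spec_step.induct) (auto elim: slh_safe.cases)

fun misspec_safe :: "(vname \<Rightarrow> bool) \<Rightarrow> (aname \<Rightarrow> bool) \<Rightarrow> config \<Rightarrow> bool" where
  "misspec_safe P PA (c, \<rho>, \<mu>, \<beta>) \<longleftrightarrow>
     slh_reachable P PA c \<and> (\<beta> \<longrightarrow> \<rho> bvar = 1 \<or> sets_b_next c \<rho>) \<and> (\<forall>a. 0 < length (\<mu> a))"

lemma misspec_safe_step:
  assumes "misspec_safe P PA cf" and "spec_step cf ds os cf'"
  shows "misspec_safe P PA cf'"
proof -
  obtain c \<rho> \<mu> \<beta> c' \<rho>' \<mu>' \<beta>' where cf: "cf = (c, \<rho>, \<mu>, \<beta>)" and cf': "cf' = (c', \<rho>', \<mu>', \<beta>')"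
    by (cases cf, cases cf') auto
  note step = assms(2)[unfolded cf cf']
  have reachable: "slh_reachable P PA c" and positive: "\<forall>a. 0 < length (\<mu> a)"
    and inv: "\<beta> \<longrightarrow> \<rho> bvar = 1 \<or> sets_b_next c \<rho>"
    using assms(1) cf by auto
  have "\<beta>' \<longrightarrow> \<rho>' bvar = 1 \<or> sets_b_next c' \<rho>'"
    using spec_step_flag[OF step] slh_reachable_force_sets_b[OF reachable] step
      slh_safe_step_keeps_b[OF step slh_reachable_safe[OF reachable]] sets_b_next_step[OF step] inv
    by auto
  with slh_reachable_step[OF reachable step] positive spec_step_length_array[OF step] show ?thesis
    by (simp add: cf')
qed

fun low_equiv_config :: "(vname \<Rightarrow> bool) \<Rightarrow> (aname \<Rightarrow> bool) \<Rightarrow> config \<Rightarrow> config \<Rightarrow> bool" where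
  "low_equiv_config P PA (c1, \<rho>1, \<mu>1, \<beta>1) (c2, \<rho>2, \<mu>2, \<beta>2) \<longleftrightarrow>
     c1 = c2 \<and> \<beta>1 = \<beta>2 \<and> pub_equiv P \<rho>1 \<rho>2 \<and> \<rho>1 bvar = \<rho>2 bvar \<and> apub_equiv PA \<mu>1 \<mu>2"

lemma slh_safe_Asgn_public:
  assumes "slh_safe P PA (Asgn x e)" "pub_equiv P \<rho>1 \<rho>2" "\<rho>1 bvar = \<rho>2 bvar" "P x \<or> x = bvar"
  shows "aeval e \<rho>1 = aeval e \<rho>2"
  using assms(1)
proof cases
  case Asgn
  with assms(2,4) show ?thesis by (auto simp: flows_def intro: aeval_pub_equiv)
qed (use assms(2,3) beval_pub_equiv in auto)

lemma Asgn_steps_low_equiv: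
  assumes "slh_safe P PA (Asgn x e)" "pub_equiv P \<rho>1 \<rho>2" "\<rho>1 bvar = \<rho>2 bvar"
    "apub_equiv PA \<mu>1 \<mu>2"
    "spec_step (Asgn x e, \<rho>1, \<mu>1, \<beta>) ds os1 cf1" "spec_step (Asgn x e, \<rho>2, \<mu>2, \<beta>) ds os2 cf2"
  shows "os1 = os2 \<and> low_equiv_config P PA cf1 cf2"
  using assms(5,6) slh_safe_Asgn_public[OF assms(1-3)] assms(2-4)
  by (auto elim!: Asgn_stepE intro!: pub_equiv_update)

lemma ARead_steps_low_equiv:
  assumes "slh_safe P PA (ARead x a ie)" "pub_equiv P \<rho>1 \<rho>2" "\<rho>1 bvar = \<rho>2 bvar"
    "apub_equiv PA \<mu>1 \<mu>2" "\<beta> \<longrightarrow> \<rho>1 bvar = 1" "\<forall>a. 0 < length (\<mu>1 a)"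
    "spec_step (ARead x a ie, \<rho>1, \<mu>1, \<beta>) ds os1 cf1" "spec_step (ARead x a ie, \<rho>2, \<mu>2, \<beta>) ds os2 cf2"
  shows "os1 = os2 \<and> low_equiv_config P PA cf1 cf2"
  using assms(1)
proof cases
  case (Read_public i)
  have "aeval ie \<rho>1 = aeval ie \<rho>2"
    using Read_public aeval_pub_equiv[OF _ assms(2)] assms(3) by (auto intro: aeval_mask_eq)
  moreover have "\<mu>1 a = \<mu>2 a"
    using Read_public assms(4) by (auto simp: apub_equiv_def)
  \<comment> \<open>a misspeculated load is impossible: \<open>bvar = 1\<close> masks the index to 0, which is in bounds\<close>
  moreover have "\<not> (\<beta> \<and> length (\<mu>1 a) \<le> aeval ie \<rho>1)"
    using Read_public assms(5,6) aeval_mask_misspec by (metis not_le)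
  ultimately show ?thesis
    using assms(2-4,7,8) Read_public by (auto elim!: ARead_stepE intro!: pub_equiv_update)
next
  case Read_secret
  then have "aeval ie \<rho>1 = aeval ie \<rho>2"
    using aeval_pub_equiv[OF _ assms(2)] by auto
  then show ?thesis
    using assms(2-4,7,8) Read_secret by (auto elim!: ARead_stepE intro!: pub_equiv_update)
qed

lemma AWrite_steps_low_equiv:
  assumes "slh_safe P PA (AWrite a ie e)" "pub_equiv P \<rho>1 \<rho>2" "\<rho>1 bvar = \<rho>2 bvar"
    "apub_equiv PA \<mu>1 \<mu>2" "\<beta> \<longrightarrow> \<rho>1 bvar = 1" "\<forall>a. 0 < length (\<mu>1 a)"
    "spec_step (AWrite a ie e, \<rho>1, \<mu>1, \<beta>) ds os1 cf1" "spec_step (AWrite a ie e, \<rho>2, \<mu>2, \<beta>) ds os2 cf2"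
  shows "os1 = os2 \<and> low_equiv_config P PA cf1 cf2"
  using assms(1)
proof cases
  case Write_public
  then have "aeval ie \<rho>1 = aeval ie \<rho>2" "aeval e \<rho>1 = aeval e \<rho>2"
    using aeval_pub_equiv[OF _ assms(2)] by auto
  then show ?thesis
    using assms(2-4,7,8) by (auto elim!: AWrite_stepE intro!: apub_equiv_update simp: apub_equiv_def)
next
  case (Write_secret i)
  have "aeval ie \<rho>1 = aeval ie \<rho>2"
    using Write_secret aeval_pub_equiv[OF _ assms(2)] assms(3) by (auto intro: aeval_mask_eq)
  moreover have "\<not> (\<beta> \<and> length (\<mu>1 a) \<le> aeval ie \<rho>1)"
    using Write_secret assms(5,6) aeval_mask_misspec by (metis not_le)
  ultimately show ?thesis
    using assms(2-4,7,8) Write_secret by (auto elim!: AWrite_stepE intro!: apub_equiv_update)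
qed

lemma spec_step_low_equiv:
  assumes "slh_safe P PA c" "pub_equiv P \<rho>1 \<rho>2" "\<rho>1 bvar = \<rho>2 bvar" "apub_equiv PA \<mu>1 \<mu>2"
    "\<beta> \<longrightarrow> \<rho>1 bvar = 1 \<or> sets_b_next c \<rho>1" "\<forall>a. 0 < length (\<mu>1 a)"
    "spec_step (c, \<rho>1, \<mu>1, \<beta>) ds os1 cf1" "spec_step (c, \<rho>2, \<mu>2, \<beta>) ds os2 cf2"
  shows "os1 = os2 \<and> low_equiv_config P PA cf1 cf2"
  using assms
proof (induction c arbitrary: ds os1 os2 cf1 cf2 rule: com.induct)
  case Asgn
  then show ?case using Asgn_steps_low_equiv[OF Asgn.prems(1-4,7,8)] by simp
next
  case (Seq c1 c2)
  show ?case
  proof (cases "c1 = Skip")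
    case True
    with Seq.prems(2-4,7,8) show ?thesis by (auto elim!: Seq_stepE)
  next
    case False
    obtain c1' \<rho>1' \<mu>1' \<beta>1' where cf1: "cf1 = (Seq c1' c2, \<rho>1', \<mu>1', \<beta>1')"
      and step1: "spec_step (c1, \<rho>1, \<mu>1, \<beta>) ds os1 (c1', \<rho>1', \<mu>1', \<beta>1')"
      using Seq.prems(7) False by (elim Seq_stepE) auto
    obtain c2' \<rho>2' \<mu>2' \<beta>2' where cf2: "cf2 = (Seq c2' c2, \<rho>2', \<mu>2', \<beta>2')"
      and step2: "spec_step (c1, \<rho>2, \<mu>2, \<beta>) ds os2 (c2', \<rho>2', \<mu>2', \<beta>2')"
      using Seq.prems(8) False by (elim Seq_stepE) auto
    have "slh_safe P PA c1"
      using Seq.prems(1) by (auto elim: slh_safe.cases)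
    moreover have "\<beta> \<longrightarrow> \<rho>1 bvar = 1 \<or> sets_b_next c1 \<rho>1"
      using Seq.prems(5) False by auto
    ultimately have "os1 = os2 \<and> low_equiv_config P PA (c1', \<rho>1', \<mu>1', \<beta>1') (c2', \<rho>2', \<mu>2', \<beta>2')"
      using Seq.IH(1) Seq.prems(2-4,6) step1 step2 by blast
    then show ?thesis
      using cf1 cf2 by simp
  qed
next
  case (If be c1 c2)
  then have "beval be \<rho>1 = beval be \<rho>2"
    using beval_pub_equiv by (auto elim: slh_safe.cases)
  with If.prems(2-4,7,8) show ?case by (auto elim!: If_stepE)
next
  case While
  then show ?case by (auto elim!: While_stepE)
next
  case ARead
  then show ?case using ARead_steps_low_equiv by simp
next
  case AWrite
  then show ?case using AWrite_steps_low_equiv by simp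
qed auto

lemma spec_multi_low_equiv_obs_eq:
  assumes "spec_multi cf1 D O1 cf1'" "spec_multi cf2 D O2 cf2'"
    "low_equiv_config P PA cf1 cf2" "misspec_safe P PA cf1"
  shows "O1 = O2"
  using assms
proof (induction arbitrary: cf2 O2 rule: spec_multi.induct)
  case (refl cf)
  then show ?case using spec_multi_length[OF refl.prems(1)] by simp
next
  case (step cf1 ds os1 cfm1 ds' os1' cf1'')
  obtain c \<rho>1 \<mu>1 \<beta> where cf1: "cf1 = (c, \<rho>1, \<mu>1, \<beta>)" by (cases cf1) auto
  from step.prems(1) show ?case
  proof cases
    case refl
    then show ?thesis using spec_step_length[OF step.hyps(1)] spec_multi_length[OF step.hyps(2)]
      by simp
  next
    case (step ds2 os2 cfm2 ds2' os2')
    obtain \<rho>2 \<mu>2 where cf2: "cf2 = (c, \<rho>2, \<mu>2, \<beta>)"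
      using step.prems(2) cf1 by (cases cf2) auto
    have step1: "spec_step (c, \<rho>1, \<mu>1, \<beta>) ds os1 cfm1"
      and step2: "spec_step (c, \<rho>2, \<mu>2, \<beta>) ds2 os2 cfm2"
      using step.hyps(1) \<open>spec_step cf2 ds2 os2 cfm2\<close> cf1 cf2 by simp_all
    have "ds = ds2" "ds' = ds2'"
      using spec_step_dirs_length_eq[OF step1 step2] \<open>ds @ ds' = ds2 @ ds2'\<close> by simp_all
    moreover have "slh_safe P PA c" "\<beta> \<longrightarrow> \<rho>1 bvar = 1 \<or> sets_b_next c \<rho>1"
      "\<forall>a. 0 < length (\<mu>1 a)"
      using step.prems(3) cf1 slh_reachable_safe by auto
    moreover have "pub_equiv P \<rho>1 \<rho>2" "\<rho>1 bvar = \<rho>2 bvar" "apub_equiv PA \<mu>1 \<mu>2"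
      using step.prems(2) cf1 cf2 by auto
    ultimately have "os1 = os2 \<and> low_equiv_config P PA cfm1 cfm2"
      using spec_step_low_equiv step1 step2 by metis
    moreover have "misspec_safe P PA cfm1"
      using misspec_safe_step[OF step.prems(3) step.hyps(1)] .
    ultimately show ?thesis
      using step.IH \<open>spec_multi cfm2 ds2' os2' cf2'\<close> \<open>ds' = ds2'\<close> \<open>O2 = os2 @ os2'\<close>
      by blast
  qed
qed

theorem theorem3p1:
  fixes P :: "vname \<Rightarrow> bool" and PA :: "aname \<Rightarrow> bool" and c :: com
    and \<rho>1 \<rho>2 :: state and \<mu>1 \<mu>2 :: astate
  assumes "bvar \<notin> used_vars c"
    and "\<rho>1 bvar = 0" and "\<rho>2 bvar = 0"
    and "\<forall>a. length (\<mu>1 a) > 0" and "\<forall>a. length (\<mu>2 a) > 0"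
    and "ct_typed P PA c"
    and "pub_equiv P \<rho>1 \<rho>2"
    and "apub_equiv PA \<mu>1 \<mu>2"
  shows "spec_equiv (sislh P c, \<rho>1, \<mu>1, False) (sislh P c, \<rho>2, \<mu>2, False)"
proof -
  have "low_equiv_config P PA (sislh P c, \<rho>1, \<mu>1, False) (sislh P c, \<rho>2, \<mu>2, False)"
    using assms(2,3,7,8) by simp
  moreover have "misspec_safe P PA (sislh P c, \<rho>1, \<mu>1, False)"
    using slh_reachable_sislh[OF assms(6,1)] assms(4) by simp
  ultimately show ?thesis
    unfolding spec_equiv_def using spec_multi_low_equiv_obs_eq by blast
qed

end
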